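(* Let $E$ be a pseudofinite virtual complex of positive admissible Hilbert space complexes and $r\ge0$. Suppose the $r$-th torsion of $E$ is defined, i.e. $\tau_0(E^{(i)})=1$ for $i=0,\dots,r-1$ (so that $E^{(r)}$ is pseudofinite). Then $$\tau_r(E)=\prod_{p=0}^\infty\det{}'(\Delta\,|\,E_p)^{(-1)^{p+r-1}\binom{p}{r}},$$ where the product is in fact finite.
   Context: For a positive admissible complex (Laplacians $\Delta_p=dd^*+d^*d|_{E_p}$ admissible off their kernels) $\det'(\Delta_p)$ is the zeta-regularized determinant of $\Delta_p$ on $(\ker\Delta_p)^\perp$. For a virtual complex $E=E_+-E_-$, $\det'(\Delta|E_k)=\det'(\Delta|(E_+)_k)/\det'(\Delta|(E_-)_k)$; $E$ is pseudofinite if $\det'(\Delta|E_k)=1$ for all large $k$, and then $\det'(\Delta|E)=\prod_k\det'(\Delta|E_k)^{(-1)^k}$ and $\tau_0(E)=\det'(\Delta|E)^{-1}$. The twist of $E$ is $E'=\sum_{k\ge0}(-1)^kE[-k]$ with $E[j]_k=E_{k+j}$ (degree-$j$ component $\sum_{k=0}^{j}(-1)^kE_{j-k}$); higher twists are $E^{(0)}=E$, $E^{(n+1)}=(E^{(n)})'$. If $\tau_0(E^{(i)})=1$ for $i<r$, the $r$-th torsion is $\tau_r(E)=\tau_0(E^{(r)})$. *)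

theory Defs
  imports "HOL-Analysis.Analysis"
begin

text \<open>
  A (positive) Laplacian restricted to the orthogonal complement of its
  kernel is recorded by its spectrum with multiplicities: a function
  m :: real => nat, m l = multiplicity of the eigenvalue l.  Direct sums of Hilbert
  spaces (with the direct-sum Laplacian) correspond to pointwise sums of multiplicity
  functions.  Zeta-regularised determinants depend only on this data.
\<close>

type_synonym spectrum = "real \<Rightarrow> nat"

definition spec_ok :: "spectrum \<Rightarrow> bool" where
  "spec_ok m \<longleftrightarrow> (\<forall>l. 0 < m l \<longrightarrow> 0 < l) \<and> (\<forall>c. finite {l. 0 < m l \<and> l \<le> c})"

definition zeta_cont :: "spectrum \<Rightarrow> (complex \<Rightarrow> complex) \<Rightarrow> complex set \<Rightarrow> bool" where
  "zeta_cont m f S \<longleftrightarrow> S sparse_in UNIV \<and> 0 \<notin> S \<and> f holomorphic_on (- S) \<and>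
     (\<exists>\<sigma>. \<forall>s. \<sigma> < Re s \<longrightarrow>
        ((\<lambda>l. of_nat (m l) * (complex_of_real l) powr (- s)) has_sum f s) {l. 0 < m l})"

definition admissible :: "spectrum \<Rightarrow> bool" where
  "admissible m \<longleftrightarrow> spec_ok m \<and> (\<exists>f S. zeta_cont m f S)"

definition det' :: "spectrum \<Rightarrow> real" where
  "det' m = exp (- Re (deriv (SOME f. \<exists>S. zeta_cont m f S) 0))"

text \<open>A virtual complex E = E_+ - E_-: degree p components of E_+ and E_-.\<close>
type_synonym vcomplex = "(nat \<Rightarrow> spectrum) \<times> (nat \<Rightarrow> spectrum)"

definition pos_admissible :: "vcomplex \<Rightarrow> bool" where
  "pos_admissible E \<longleftrightarrow> (\<forall>p. admissible (fst E p) \<and> admissible (snd E p))"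

definition vdet :: "vcomplex \<Rightarrow> nat \<Rightarrow> real" where
  "vdet E k = det' (fst E k) / det' (snd E k)"

definition pseudofinite :: "vcomplex \<Rightarrow> bool" where
  "pseudofinite E \<longleftrightarrow> (\<exists>N. \<forall>k\<ge>N. vdet E k = 1)"

definition detE :: "vcomplex \<Rightarrow> real" where
  "detE E = (let N = (LEAST N. \<forall>k\<ge>N. vdet E k = 1)
             in \<Prod>k<N. vdet E k powi ((-1) ^ k))"

definition tau0 :: "vcomplex \<Rightarrow> real" where
  "tau0 E = inverse (detE E)"

text \<open>Twist E' = sum_k (-1)^k E[-k]; degree j component sum_{k=0}^j (-1)^k E_{j-k}.
  The sign (-1)^k exchanges the positive and negative parts.\<close>
definition twist :: "vcomplex \<Rightarrow> vcomplex" where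
  "twist E =
    ((\<lambda>j l. (\<Sum>k\<in>{k. k \<le> j \<and> even k}. fst E (j - k) l) + (\<Sum>k\<in>{k. k \<le> j \<and> odd k}. snd E (j - k) l)),
     (\<lambda>j l. (\<Sum>k\<in>{k. k \<le> j \<and> even k}. snd E (j - k) l) + (\<Sum>k\<in>{k. k \<le> j \<and> odd k}. fst E (j - k) l)))"

definition higher_twist :: "nat \<Rightarrow> vcomplex \<Rightarrow> vcomplex" where
  "higher_twist n E = (twist ^^ n) E"

definition tau :: "nat \<Rightarrow> vcomplex \<Rightarrow> real" where
  "tau r E = tau0 (higher_twist r E)"

end

theory Submission
  imports Defs "HOL-Complex_Analysis.Conformal_Mappings"
begin

text \<open>
  Zeta functions of direct sums add, so ln det' is additive. Writing a p = ln det'(Delta | E_p),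
  the twist acts on these logarithms as the alternating convolution
  (T a) j = sum_{k<=j} (-1)^k a (j - k) = (-1)^j sum_{p<=j} (-1)^p a p,
  while ln tau_0(E) = - sum_p (-1)^p a p. Hence, for a vanishing from N on, tau_0(E) = 1
  says exactly that T a vanishes from N on as well. Summation by parts with Pascal's rule
  turns the alternating sum of T^r a into sum_p (-1)^(p+r) C(p,r) a p; the boundary terms are
  the alternating sums of the lower twists, which vanish by hypothesis.
\<close>

lemma open_diff_sparse_nonempty:
  fixes A :: "'a::perfect_space set"
  assumes "open A" "A \<noteq> {}" "X sparse_in UNIV"
  shows "A - X \<noteq> {}"
proof
  assume "A - X = {}"
  from \<open>A \<noteq> {}\<close> obtain x where "x \<in> A" by blast
  with \<open>open A\<close> have "x islimpt A"
    by (intro interior_limit_point) (auto simp: interior_open)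
  with \<open>A - X = {}\<close> have "x islimpt X"
    by (auto intro: islimpt_subset)
  with assms(3) show False
    by (simp add: sparse_in_open)
qed

lemma zeta_cont_unique:
  assumes "zeta_cont m f S" "zeta_cont m g T" "z \<notin> S \<union> T"
  shows "f z = g z"
proof -
  from assms(1) obtain \<sigma>\<^sub>1 where f: "\<And>s. \<sigma>\<^sub>1 < Re s \<Longrightarrow>
        ((\<lambda>l. of_nat (m l) * (complex_of_real l) powr (- s)) has_sum f s) {l. 0 < m l}"
    and "S sparse_in UNIV" "f holomorphic_on - S"
    unfolding zeta_cont_def by blast
  from assms(2) obtain \<sigma>\<^sub>2 where g: "\<And>s. \<sigma>\<^sub>2 < Re s \<Longrightarrow>
        ((\<lambda>l. of_nat (m l) * (complex_of_real l) powr (- s)) has_sum g s) {l. 0 < m l}"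
    and "T sparse_in UNIV" "g holomorphic_on - T"
    unfolding zeta_cont_def by blast
  define H where "H = {s. max \<sigma>\<^sub>1 \<sigma>\<^sub>2 < Re s}"
  have sparse: "S \<union> T sparse_in UNIV"
    using \<open>S sparse_in UNIV\<close> \<open>T sparse_in UNIV\<close> by (rule sparse_in_union')
  have "open H"
    unfolding H_def by (rule open_halfspace_Re_gt)
  have "of_real (max \<sigma>\<^sub>1 \<sigma>\<^sub>2 + 1) \<in> H"
    unfolding H_def by (simp add: max_def)
  show ?thesis
  proof (rule analytic_continuation_open[of "H - (S \<union> T)" "- (S \<union> T)" f g])
    have "closed (S \<union> T)"
      using sparse by (rule sparse_in_UNIV_imp_closed)
    then show "open (- (S \<union> T))" "open (H - (S \<union> T))"
      using \<open>open H\<close> by (simp_all only: open_Compl open_Diff)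
    show "connected (- (S \<union> T))"
      using sparse_imp_connected[of UNIV "S \<union> T"] sparse
      by (simp add: Compl_eq_Diff_UNIV connected_UNIV)
    show "H - (S \<union> T) \<noteq> {}"
      using \<open>open H\<close> \<open>_ \<in> H\<close> sparse by (intro open_diff_sparse_nonempty) auto
    show "f holomorphic_on - (S \<union> T)"
      using \<open>f holomorphic_on - S\<close> by (rule holomorphic_on_subset) blast
    show "g holomorphic_on - (S \<union> T)"
      using \<open>g holomorphic_on - T\<close> by (rule holomorphic_on_subset) blast
    show "f w = g w" if "w \<in> H - (S \<union> T)" for w
      using that has_sum_unique[OF f[of w] g[of w]] unfolding H_def by auto
  qed (use assms(3) in auto)
qed

lemma zeta_cont_differentiable_at_0:
  assumes "zeta_cont m f S"
  shows "f field_differentiable at 0"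
proof -
  have "open (- S)" "0 \<in> - S" "f holomorphic_on - S"
    using assms sparse_in_UNIV_imp_closed unfolding zeta_cont_def by auto
  then show ?thesis
    using holomorphic_on_imp_differentiable_at by blast
qed

lemma zeta_cont_deriv_0_unique:
  assumes "zeta_cont m f S" "zeta_cont m g T"
  shows "deriv f 0 = deriv g 0"
proof (rule deriv_cong_ev)
  have "open (- (S \<union> T))" "0 \<in> - (S \<union> T)"
    using assms unfolding zeta_cont_def
    by (auto intro!: open_Compl closed_Un sparse_in_UNIV_imp_closed simp del: Compl_Un)
  then have "\<forall>\<^sub>F z in nhds 0. z \<in> - (S \<union> T)"
    by (rule eventually_nhds_in_open)
  then show "\<forall>\<^sub>F z in nhds 0. f z = g z"
    by eventually_elim (use zeta_cont_unique[OF assms] in simp)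
qed simp

lemma det'_eq_zeta_cont:
  assumes "zeta_cont m f S"
  shows "det' m = exp (- Re (deriv f 0))"
proof -
  have "\<exists>T. zeta_cont m (SOME f. \<exists>S. zeta_cont m f S) T"
    using someI_ex[of "\<lambda>f. \<exists>S. zeta_cont m f S"] assms by blast
  then obtain T where "zeta_cont m (SOME f. \<exists>S. zeta_cont m f S) T" ..
  then show ?thesis
    unfolding det'_def using zeta_cont_deriv_0_unique[OF _ assms] by metis
qed

lemma det'_pos: "0 < det' m"
  by (simp add: det'_def)

lemma zeta_cont_add:
  assumes "zeta_cont m\<^sub>1 f\<^sub>1 S\<^sub>1" "zeta_cont m\<^sub>2 f\<^sub>2 S\<^sub>2"
  shows "zeta_cont (\<lambda>l. m\<^sub>1 l + m\<^sub>2 l) (\<lambda>s. f\<^sub>1 s + f\<^sub>2 s) (S\<^sub>1 \<union> S\<^sub>2)"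
proof -
  let ?term = "\<lambda>m s l. of_nat (m l) * (complex_of_real l) powr (- s)"
  from assms(1) obtain \<sigma>\<^sub>1
    where f\<^sub>1: "\<And>s. \<sigma>\<^sub>1 < Re s \<Longrightarrow> (?term m\<^sub>1 s has_sum f\<^sub>1 s) {l. 0 < m\<^sub>1 l}"
    unfolding zeta_cont_def by blast
  from assms(2) obtain \<sigma>\<^sub>2
    where f\<^sub>2: "\<And>s. \<sigma>\<^sub>2 < Re s \<Longrightarrow> (?term m\<^sub>2 s has_sum f\<^sub>2 s) {l. 0 < m\<^sub>2 l}"
    unfolding zeta_cont_def by blast
  have "(?term (\<lambda>l. m\<^sub>1 l + m\<^sub>2 l) s has_sum (f\<^sub>1 s + f\<^sub>2 s)) {l. 0 < m\<^sub>1 l + m\<^sub>2 l}"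
    if "max \<sigma>\<^sub>1 \<sigma>\<^sub>2 < Re s" for s
  proof -
    have "(?term m\<^sub>1 s has_sum f\<^sub>1 s) {l. 0 < m\<^sub>1 l + m\<^sub>2 l}"
      by (subst has_sum_cong_neutral[where T="{l. 0 < m\<^sub>1 l}"]) (use f\<^sub>1 that in auto)
    moreover have "(?term m\<^sub>2 s has_sum f\<^sub>2 s) {l. 0 < m\<^sub>1 l + m\<^sub>2 l}"
      by (subst has_sum_cong_neutral[where T="{l. 0 < m\<^sub>2 l}"]) (use f\<^sub>2 that in auto)
    ultimately show ?thesis
      by (auto dest: has_sum_add simp: distrib_right)
  qed
  moreover have "(\<lambda>s. f\<^sub>1 s + f\<^sub>2 s) holomorphic_on - (S\<^sub>1 \<union> S\<^sub>2)"
    using assms unfolding zeta_cont_def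
    by (auto intro!: holomorphic_intros intro: holomorphic_on_subset)
  ultimately show ?thesis
    using assms unfolding zeta_cont_def
    by (auto intro!: sparse_in_union' exI[of _ "max \<sigma>\<^sub>1 \<sigma>\<^sub>2"])
qed

lemma spec_ok_add:
  assumes "spec_ok m\<^sub>1" "spec_ok m\<^sub>2"
  shows "spec_ok (\<lambda>l. m\<^sub>1 l + m\<^sub>2 l)"
proof -
  have "{l. 0 < m\<^sub>1 l + m\<^sub>2 l \<and> l \<le> c} =
        {l. 0 < m\<^sub>1 l \<and> l \<le> c} \<union> {l. 0 < m\<^sub>2 l \<and> l \<le> c}" for c
    by auto
  then show ?thesis
    using assms unfolding spec_ok_def by auto
qed

lemma admissible_add:
  assumes "admissible m\<^sub>1" "admissible m\<^sub>2"
  shows "admissible (\<lambda>l. m\<^sub>1 l + m\<^sub>2 l)"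
  using assms zeta_cont_add spec_ok_add unfolding admissible_def by blast

lemma det'_add:
  assumes "admissible m\<^sub>1" "admissible m\<^sub>2"
  shows "det' (\<lambda>l. m\<^sub>1 l + m\<^sub>2 l) = det' m\<^sub>1 * det' m\<^sub>2"
proof -
  from assms obtain f\<^sub>1 S\<^sub>1 f\<^sub>2 S\<^sub>2 where f: "zeta_cont m\<^sub>1 f\<^sub>1 S\<^sub>1" "zeta_cont m\<^sub>2 f\<^sub>2 S\<^sub>2"
    unfolding admissible_def by blast
  then have "deriv (\<lambda>s. f\<^sub>1 s + f\<^sub>2 s) 0 = deriv f\<^sub>1 0 + deriv f\<^sub>2 0"
    by (intro deriv_add zeta_cont_differentiable_at_0)
  then show ?thesis
    by (simp add: det'_eq_zeta_cont[OF zeta_cont_add[OF f]] det'_eq_zeta_cont[OF f(1)]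
        det'_eq_zeta_cont[OF f(2)] flip: exp_add)
qed

lemma admissible_zero: "admissible (\<lambda>l. 0)"
  and det'_zero: "det' (\<lambda>l. 0) = 1"
proof -
  have "zeta_cont (\<lambda>l. 0) (\<lambda>s. 0) {}"
    unfolding zeta_cont_def by auto
  then show "admissible (\<lambda>l. 0)" "det' (\<lambda>l. 0) = 1"
    unfolding admissible_def spec_ok_def by (auto simp: det'_eq_zeta_cont)
qed

lemma admissible_sum:
  assumes "finite A" "\<And>k. k \<in> A \<Longrightarrow> admissible (m k)"
  shows "admissible (\<lambda>l. \<Sum>k\<in>A. m k l)"
  using assms by (induction A rule: finite_induct) (simp_all add: admissible_zero admissible_add)

lemma det'_sum:
  assumes "finite A" "\<And>k. k \<in> A \<Longrightarrow> admissible (m k)"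
  shows "det' (\<lambda>l. \<Sum>k\<in>A. m k l) = (\<Prod>k\<in>A. det' (m k))"
  using assms by (induction A rule: finite_induct) (simp_all add: det'_zero det'_add admissible_sum)

definition seq_twist :: "(nat \<Rightarrow> 'a::comm_ring_1) \<Rightarrow> nat \<Rightarrow> 'a" where
  "seq_twist a j = (\<Sum>k\<le>j. (-1)^k * a (j - k))"

definition alt_sum :: "(nat \<Rightarrow> 'a::comm_ring_1) \<Rightarrow> nat \<Rightarrow> 'a" where
  "alt_sum a M = (\<Sum>k<M. (-1)^k * a k)"

lemma alt_sum_0: "alt_sum a 0 = 0"
  by (simp add: alt_sum_def)

lemma alt_sum_Suc: "alt_sum a (Suc M) = alt_sum a M + (-1)^M * a M"
  by (simp add: alt_sum_def)

lemma seq_twist_0: "seq_twist a 0 = a 0"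
  by (simp add: seq_twist_def)

lemma seq_twist_Suc: "seq_twist a (Suc j) = a (Suc j) - seq_twist a j"
  unfolding seq_twist_def by (subst sum.atMost_Suc_shift) (simp add: sum_negf)

lemma seq_twist_eq_alt_sum: "seq_twist a j = (-1)^j * alt_sum a (Suc j)"
  by (induction j) (simp_all add: seq_twist_0 seq_twist_Suc alt_sum_0 alt_sum_Suc algebra_simps)

lemma alt_sum_eq_beyond_support:
  assumes "\<forall>k\<ge>N. a k = 0" "N \<le> M"
  shows "alt_sum a M = alt_sum a N"
  using assms(2) by (induction M rule: dec_induct) (simp_all add: alt_sum_Suc assms(1))

lemma seq_twist_vanishes:
  assumes "\<forall>k\<ge>N. a k = 0" "alt_sum a N = 0"
  shows "\<forall>k\<ge>N. seq_twist a k = 0"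
  using alt_sum_eq_beyond_support[OF assms(1)] assms(2) by (simp add: seq_twist_eq_alt_sum)

lemma binomial_alt_sum_seq_twist:
  "(\<Sum>p<M. (-1)^(p + r) * of_nat (p choose r) * seq_twist a p) =
   (\<Sum>p<M. (-1)^(p + Suc r) * of_nat (p choose Suc r) * a p)
     + (-1)^r * of_nat (M choose Suc r) * alt_sum a M"
proof (induction M)
  case (Suc M)
  have sq: "(-1::'a)^M * (-1)^M = 1"
    by (simp flip: power_add)
  have "(-1)^(M + r) * of_nat (M choose r) * seq_twist a M =
        (-1)^r * of_nat (M choose r) * alt_sum a (Suc M)"
    by (simp add: seq_twist_eq_alt_sum power_add sq algebra_simps)
  then show ?case
    unfolding sum.lessThan_Suc Suc.IH binomial_Suc_Suc alt_sum_Suc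
    by (simp add: power_add sq algebra_simps)
qed (simp add: alt_sum_0)

lemma alt_sum_iterated_seq_twist:
  assumes "\<forall>k\<ge>N. a k = 0" "\<forall>i<r. alt_sum ((seq_twist ^^ i) a) N = 0" "N \<le> M"
  shows "alt_sum ((seq_twist ^^ r) a) M = (\<Sum>p<M. (-1)^(p + r) * of_nat (p choose r) * a p)"
  using assms(1,2)
proof (induction r arbitrary: a)
  case 0
  then show ?case by (simp add: alt_sum_def)
next
  case (Suc r)
  have "alt_sum a M = 0"
    using alt_sum_eq_beyond_support[OF Suc.prems(1) \<open>N \<le> M\<close>] Suc.prems(2) by auto
  have shift: "(seq_twist ^^ Suc i) a = (seq_twist ^^ i) (seq_twist a)" for i
    by (simp only: funpow_Suc_right o_apply)
  have "alt_sum ((seq_twist ^^ Suc r) a) M = alt_sum ((seq_twist ^^ r) (seq_twist a)) M"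
    by (simp only: shift)
  also have "\<dots> = (\<Sum>p<M. (-1)^(p + r) * of_nat (p choose r) * seq_twist a p)"
  proof (rule Suc.IH)
    show "\<forall>k\<ge>N. seq_twist a k = 0"
      using Suc.prems by (intro seq_twist_vanishes) auto
    show "\<forall>i<r. alt_sum ((seq_twist ^^ i) (seq_twist a)) N = 0"
      using Suc.prems(2) by (auto simp del: funpow.simps simp flip: shift)
  qed
  also have "\<dots> = (\<Sum>p<M. (-1)^(p + Suc r) * of_nat (p choose Suc r) * a p)"
    using \<open>alt_sum a M = 0\<close> by (simp add: binomial_alt_sum_seq_twist)
  finally show ?case .
qed

lemma twist_components:
  "fst (twist E) j = (\<lambda>l. \<Sum>k\<le>j. (if even k then fst E else snd E) (j - k) l)"
  "snd (twist E) j = (\<lambda>l. \<Sum>k\<le>j. (if even k then snd E else fst E) (j - k) l)"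
proof -
  have split: "(\<Sum>k\<le>j. (if even k then f k else g k)) =
      (\<Sum>k\<in>{k. k \<le> j \<and> even k}. f k) + (\<Sum>k\<in>{k. k \<le> j \<and> odd k}. g k)"
    for f g :: "nat \<Rightarrow> nat"
    by (simp add: sum.If_cases Int_def conj_commute)
  show "fst (twist E) j = (\<lambda>l. \<Sum>k\<le>j. (if even k then fst E else snd E) (j - k) l)"
       "snd (twist E) j = (\<lambda>l. \<Sum>k\<le>j. (if even k then snd E else fst E) (j - k) l)"
    unfolding twist_def by (simp_all add: if_distrib[of "\<lambda>F. F (j - _) _"] split)
qed

definition log_vdet :: "vcomplex \<Rightarrow> nat \<Rightarrow> real" where
  "log_vdet E k = ln (vdet E k)"

lemma vdet_pos: "0 < vdet E k"
  by (simp add: vdet_def det'_pos)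

lemma vdet_powi: "vdet E k powi n = exp (of_int n * log_vdet E k)"
  using vdet_pos[of E k] by (simp add: log_vdet_def powr_def flip: powr_real_of_int')

lemma vdet_eq_1_iff: "vdet E k = 1 \<longleftrightarrow> log_vdet E k = 0"
  using vdet_pos[of E k] by (simp add: log_vdet_def)

lemma log_vdet_eq: "log_vdet E k = ln (det' (fst E k)) - ln (det' (snd E k))"
  using det'_pos[of "fst E k"] det'_pos[of "snd E k"]
  by (simp add: log_vdet_def vdet_def ln_div)

lemma pos_admissible_twist:
  assumes "pos_admissible E"
  shows "pos_admissible (twist E)"
  using assms unfolding pos_admissible_def twist_components by (auto intro!: admissible_sum)

lemma log_vdet_twist:
  assumes "pos_admissible E"
  shows "log_vdet (twist E) = seq_twist (log_vdet E)"
proof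
  fix j
  have det'_twist:
    "det' (fst (twist E) j) = (\<Prod>k\<le>j. det' ((if even k then fst E else snd E) (j - k)))"
    "det' (snd (twist E) j) = (\<Prod>k\<le>j. det' ((if even k then snd E else fst E) (j - k)))"
    using assms unfolding pos_admissible_def twist_components by (auto intro!: det'_sum)
  have "log_vdet (twist E) j =
      (\<Sum>k\<le>j. ln (det' ((if even k then fst E else snd E) (j - k)))
              - ln (det' ((if even k then snd E else fst E) (j - k))))"
  proof -
    have "det' m \<noteq> 0" for m
      using det'_pos[of m] by simp
    then show ?thesis
      by (simp add: log_vdet_eq det'_twist ln_prod sum_subtractf)
  qed
  also have "\<dots> = (\<Sum>k\<le>j. (-1)^k * log_vdet E (j - k))"
    by (intro sum.cong) (auto simp: log_vdet_eq)
  finally show "log_vdet (twist E) j = seq_twist (log_vdet E) j"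
    by (simp add: seq_twist_def)
qed

lemma pos_admissible_higher_twist:
  assumes "pos_admissible E"
  shows "pos_admissible (higher_twist i E)"
  unfolding higher_twist_def by (induction i) (simp_all add: assms pos_admissible_twist)

lemma log_vdet_higher_twist:
  assumes "pos_admissible E"
  shows "log_vdet (higher_twist i E) = (seq_twist ^^ i) (log_vdet E)"
  using pos_admissible_higher_twist[OF assms] unfolding higher_twist_def
  by (induction i) (simp_all add: log_vdet_twist)

lemma detE_eq_prod:
  assumes "\<forall>k\<ge>N. vdet E k = 1"
  shows "detE E = (\<Prod>k<N. vdet E k powi (-1)^k)"
proof -
  define L where "L = (LEAST N. \<forall>k\<ge>N. vdet E k = 1)"
  have "L \<le> N" "\<forall>k\<ge>L. vdet E k = 1"
    unfolding L_def using assms by (rule Least_le, rule LeastI)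
  then show ?thesis
    unfolding detE_def L_def[symmetric] Let_def by (intro prod.mono_neutral_left) auto
qed

lemma tau0_eq_exp_alt_sum:
  assumes "\<forall>k\<ge>N. vdet E k = 1"
  shows "tau0 E = exp (- alt_sum (log_vdet E) N)"
  by (simp add: tau0_def detE_eq_prod[OF assms] vdet_powi alt_sum_def exp_sum exp_minus)

lemma higher_twist_vdet_eq_1:
  assumes "pos_admissible E" "\<forall>k\<ge>N. vdet E k = 1" "\<forall>i<r. tau0 (higher_twist i E) = 1"
  shows "\<forall>k\<ge>N. vdet (higher_twist r E) k = 1"
  using assms(3)
proof (induction r)
  case 0
  then show ?case
    using assms(2) by (simp add: higher_twist_def)
next
  case (Suc r)
  then have trivial: "\<forall>k\<ge>N. vdet (higher_twist r E) k = 1"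
    by simp
  have "alt_sum (log_vdet (higher_twist r E)) N = 0"
    using tau0_eq_exp_alt_sum[OF trivial] Suc.prems by simp
  then have "\<forall>k\<ge>N. seq_twist (log_vdet (higher_twist r E)) k = 0"
    using trivial by (intro seq_twist_vanishes) (simp_all add: vdet_eq_1_iff)
  then show ?case
    using log_vdet_twist[OF pos_admissible_higher_twist[OF assms(1)], of r]
    by (simp add: higher_twist_def vdet_eq_1_iff)
qed

theorem proposition2p2p2:
  fixes E :: vcomplex and r :: nat
  assumes "pos_admissible E"
    and "pseudofinite E"
    and "\<forall>i<r. tau0 (higher_twist i E) = 1"
  shows "\<exists>N. \<forall>M\<ge>N. \<forall>p\<ge>N. vdet E p = 1 \<and>
           tau r E = (\<Prod>p<M. vdet E p powi ((-1) ^ (p + r + 1) * int (p choose r)))"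
proof -
  from assms(2) obtain N where N: "\<forall>k\<ge>N. vdet E k = 1"
    unfolding pseudofinite_def by blast
  have trivial: "\<forall>k\<ge>N. vdet (higher_twist i E) k = 1" if "i \<le> r" for i
    using higher_twist_vdet_eq_1[OF assms(1) N] assms(3) that by simp
  have support: "\<forall>k\<ge>N. log_vdet E k = 0"
    and moments: "\<forall>i<r. alt_sum ((seq_twist ^^ i) (log_vdet E)) N = 0"
    using N tau0_eq_exp_alt_sum[OF trivial] assms(3)
    by (simp_all add: vdet_eq_1_iff log_vdet_higher_twist[OF assms(1), symmetric])
  have "tau r E = (\<Prod>p<M. vdet E p powi ((-1) ^ (p + r + 1) * int (p choose r)))"
    if "N \<le> M" for M
  proof -
    have "\<forall>k\<ge>M. vdet (higher_twist r E) k = 1"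
      using trivial[of r] that by simp
    then have "tau r E = exp (- alt_sum ((seq_twist ^^ r) (log_vdet E)) M)"
      unfolding tau_def by (simp add: tau0_eq_exp_alt_sum log_vdet_higher_twist[OF assms(1)])
    also have "\<dots> = exp (- (\<Sum>p<M. (-1)^(p + r) * of_nat (p choose r) * log_vdet E p))"
      using alt_sum_iterated_seq_twist[OF support moments that] by simp
    also have "\<dots> = (\<Prod>p<M. vdet E p powi ((-1) ^ (p + r + 1) * int (p choose r)))"
      by (simp add: vdet_powi exp_sum flip: sum_negf)
    finally show ?thesis .
  qed
  then show ?thesis
    using N by blast
qed

end
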